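(* Let $q\equiv 1\pmod 6$ be a prime power, let $\rho$ be a primitive element of $\mathbb F_q$, and let $\pi : (\mathbb Z_2^2)^* \to \mathbb Z_3$ be a bijection. Suppose $c = c^3_q(1,2)$ is odd and $l = (c+1)/2$. Then $\operatorname{Cay}(G_{l,2,q},S(\pi))$ is edge-regular with parameters $(4lq,\ 4l-2+q,\ 4l-2)$ and has a regular clique of order $4l$.
   Context: For an additive group $A$, $A^*=A\setminus\{0\}$. $G_{l,2,q}=\mathbb Z_l\oplus\mathbb Z_2^2\oplus\mathbb F_q$. $S_0=\{(g,0): g\in(\mathbb Z_l\oplus\mathbb Z_2^2)^*\}$; for $z\in(\mathbb Z_2^2)^*$, $S_{z,\pi}=\{(0,z,\rho^j): j\in\mathbb Z,\ j\equiv\pi(z)\pmod 3\}$; $S(\pi)=S_0\cup\bigcup_z S_{z,\pi}$; $\operatorname{Cay}(G_{l,2,q},S(\pi))$ has vertex set $G_{l,2,q}$ with $x\sim y$ iff $y-x\in S(\pi)$. Write $q=6r+1$; $C^3_q(i)=\{\rho^{3j+i}:0\le j\le 2r-1\}$ for $i\in\mathbb Z_3$, $c^3_q(a,b)=|(C^3_q(a)+1)\cap C^3_q(b)|$. A graph is edge-regular with parameters $(N,k,\lambda)$ if it is non-empty, has $N$ vertices, is $k$-regular, and every two adjacent vertices have exactly $\lambda$ common neighbours. A clique $\mathcal C$ is regular if every vertex outside $\mathcal C$ is adjacent to the same number $e>0$ of vertices of $\mathcal C$. *)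

theory Defs
  imports Main
begin

(* Elements of G_{l,2,q} = Z_l + Z_2^2 + F_q are represented as triples
   (a, (z1, z2), x) with a < l, z1, z2 in {0,1}, x in the finite field 'f. *)

definition G_set :: "nat \<Rightarrow> (nat \<times> (nat \<times> nat) \<times> 'f) set" where
  "G_set l = {0..<l} \<times> ({0,1} \<times> {0,1}) \<times> UNIV"

fun G_minus :: "nat \<Rightarrow> nat \<times> (nat \<times> nat) \<times> 'f::ab_group_add
                  \<Rightarrow> nat \<times> (nat \<times> nat) \<times> 'f \<Rightarrow> nat \<times> (nat \<times> nat) \<times> 'f" where
  "G_minus l (a, (z1, z2), x) (b, (w1, w2), y) =
     ((a + l - b) mod l, ((z1 + 2 - w1) mod 2, (z2 + 2 - w2) mod 2), x - y)"

definition Z22_star :: "(nat \<times> nat) set" where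
  "Z22_star = {(0,1), (1,0), (1,1)}"

definition S0 :: "nat \<Rightarrow> (nat \<times> (nat \<times> nat) \<times> 'f::zero) set" where
  "S0 l = {(a, z, 0) | a z. a \<in> {0..<l} \<and> z \<in> {0,1} \<times> {0,1} \<and> (a, z) \<noteq> (0, (0, 0))}"

definition S_z :: "(nat \<times> nat \<Rightarrow> nat) \<Rightarrow> 'f::field \<Rightarrow> nat \<times> nat
                    \<Rightarrow> (nat \<times> (nat \<times> nat) \<times> 'f) set" where
  "S_z \<pi> \<rho> z = {(0, z, \<rho> powi j) | j::int. j mod 3 = int (\<pi> z)}"

definition S_pi :: "nat \<Rightarrow> (nat \<times> nat \<Rightarrow> nat) \<Rightarrow> 'f::field
                     \<Rightarrow> (nat \<times> (nat \<times> nat) \<times> 'f) set" where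
  "S_pi l \<pi> \<rho> = S0 l \<union> (\<Union>z\<in>Z22_star. S_z \<pi> \<rho> z)"

definition cay_adj :: "nat \<Rightarrow> (nat \<times> nat \<Rightarrow> nat) \<Rightarrow> 'f::field
     \<Rightarrow> nat \<times> (nat \<times> nat) \<times> 'f \<Rightarrow> nat \<times> (nat \<times> nat) \<times> 'f \<Rightarrow> bool" where
  "cay_adj l \<pi> \<rho> x y \<longleftrightarrow> G_minus l y x \<in> S_pi l \<pi> \<rho>"

definition primitive_element :: "'f::field \<Rightarrow> bool" where
  "primitive_element \<rho> \<longleftrightarrow> \<rho> \<noteq> 0 \<and> (\<forall>x. x \<noteq> 0 \<longrightarrow> (\<exists>j::nat. x = \<rho> ^ j))"

(* cyclotomic class C^3_q(i) = {rho^(3j+i) : 0 <= j <= 2r-1}, q = 6r+1 *)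
definition cyc_class :: "'f::{finite,field} \<Rightarrow> nat \<Rightarrow> 'f set" where
  "cyc_class \<rho> i = {\<rho> ^ (3 * j + i) | j. j < 2 * ((card (UNIV :: 'f set) - 1) div 6)}"

definition cyc_num :: "'f::{finite,field} \<Rightarrow> nat \<Rightarrow> nat \<Rightarrow> nat" where
  "cyc_num \<rho> a b = card ((\<lambda>x. x + 1) ` cyc_class \<rho> a \<inter> cyc_class \<rho> b)"

definition edge_regular :: "'v set \<Rightarrow> ('v \<Rightarrow> 'v \<Rightarrow> bool) \<Rightarrow> nat \<Rightarrow> nat \<Rightarrow> nat \<Rightarrow> bool" where
  "edge_regular V adj N k lam \<longleftrightarrow>
     finite V \<and> card V = N \<and> (\<exists>x\<in>V. \<exists>y\<in>V. adj x y) \<and>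
     (\<forall>x\<in>V. card {y\<in>V. adj x y} = k) \<and>
     (\<forall>x\<in>V. \<forall>y\<in>V. adj x y \<longrightarrow> card {w\<in>V. adj x w \<and> adj y w} = lam)"

definition is_clique :: "'v set \<Rightarrow> ('v \<Rightarrow> 'v \<Rightarrow> bool) \<Rightarrow> 'v set \<Rightarrow> bool" where
  "is_clique V adj C \<longleftrightarrow> C \<subseteq> V \<and> (\<forall>x\<in>C. \<forall>y\<in>C. x \<noteq> y \<longrightarrow> adj x y)"

definition regular_clique :: "'v set \<Rightarrow> ('v \<Rightarrow> 'v \<Rightarrow> bool) \<Rightarrow> 'v set \<Rightarrow> bool" where
  "regular_clique V adj C \<longleftrightarrow> is_clique V adj C \<and>
     (\<exists>e>0. \<forall>x\<in>V - C. card {y\<in>C. adj x y} = e)"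

end

(* Translation y |-> y - x is a bijection of G = Z_l + Z_2^2 + F_q, so the Cayley graph has degree
   |S(pi)| = (4l - 1) + 3 * 2r = 4l - 2 + q, and two adjacent vertices x, y have as many common
   neighbours as there are s in S(pi) with s - d in S(pi), where d = y - x.  If d lies in S_0, these
   s are the other 4l - 2 elements of S_0.  If d = (0, z0, u) with u in C(pi z0), they are the
   (0, w, v) with w <> z0, v in C(pi w) and v - u in C(pi (w - z0)); the substitution v = u (t + 1)
   turns each of the two choices of w into a cyclotomic number c(i, j) with {i, j} = {1, 2}, and
   c(2, 1) = c(1, 2).  Hence lambda = 2c = 4l - 2.  Finally the subgroup Z_l + Z_2^2 + 0 is a clique,
   and a vertex (a, w, t) with t <> 0 is adjacent to exactly one of its elements, namely (a, w + z, 0)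
   for the unique z with -t in C(pi z). *)

theory Submission
  imports Defs
begin

section \<open>Translations of \<open>G\<^sub>l\<^sub>,\<^sub>2\<^sub>,\<^sub>q\<close>\<close>

lemma int_diff_mod:
  fixes a b m :: nat
  assumes "b \<le> m"
  shows "int ((a + m - b) mod m) = (int a - int b) mod int m"
proof -
  have "int (a + m - b) = (int a - int b) + int m" using assms by simp
  then show ?thesis by (simp add: of_nat_mod)
qed

lemma diff_mod_eq_0_iff:
  fixes a b m :: nat
  assumes "a < m" "b < m"
  shows "(a + m - b) mod m = 0 \<longleftrightarrow> a = b"
proof (cases "b \<le> a")
  case True
  then have "a + m - b = m + (a - b)" by simp
  then have "(a + m - b) mod m = a - b" using assms by (simp only: mod_add_self1) simp
  then show ?thesis using True by simp
next
  case False
  then have "a + m - b < m" "0 < a + m - b" using assms by linarith+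
  then show ?thesis using False by simp
qed

lemma diff_mod_cancel:
  fixes a b c m :: nat
  assumes "a < m" "b < m" "c < m"
  shows "((a + m - c) mod m + m - (b + m - c) mod m) mod m = (a + m - b) mod m"
proof -
  have "int (((a + m - c) mod m + m - (b + m - c) mod m) mod m)
      = (int ((a + m - c) mod m) - int ((b + m - c) mod m)) mod int m"
    using assms by (intro int_diff_mod) simp
  also have "\<dots> = ((int a - int c) mod int m - (int b - int c) mod int m) mod int m"
    using assms by (simp add: int_diff_mod)
  also have "\<dots> = (int a - int b) mod int m" by (simp add: mod_simps)
  also have "\<dots> = int ((a + m - b) mod m)" using assms by (simp add: int_diff_mod)
  finally show ?thesis by (simp only: of_nat_eq_iff)
qed

definition Z22 :: "(nat \<times> nat) set" where
  "Z22 = {0, 1} \<times> {0, 1}"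

lemma Z22_star_eq: "Z22_star = Z22 - {(0, 0)}"
  unfolding Z22_def Z22_star_def by auto

fun z22_minus :: "nat \<times> nat \<Rightarrow> nat \<times> nat \<Rightarrow> nat \<times> nat" where
  "z22_minus (z1, z2) (w1, w2) = ((z1 + 2 - w1) mod 2, (z2 + 2 - w2) mod 2)"

lemma Z22_cases [consumes 1]:
  "w \<in> Z22 \<Longrightarrow> (w = (0, 0) \<Longrightarrow> P) \<Longrightarrow> (w = (0, 1) \<Longrightarrow> P) \<Longrightarrow> (w = (1, 0) \<Longrightarrow> P)
    \<Longrightarrow> (w = (1, 1) \<Longrightarrow> P) \<Longrightarrow> P"
  unfolding Z22_def by blast

lemma z22_minus_self [simp]: "z22_minus z z = (0, 0)"
  by (cases z) simp

lemma z22_minus_in: "w \<in> Z22 \<Longrightarrow> z \<in> Z22 \<Longrightarrow> z22_minus w z \<in> Z22"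
  by (elim Z22_cases) (simp_all add: Z22_def)

lemma z22_minus_eq_0_iff: "w \<in> Z22 \<Longrightarrow> z \<in> Z22 \<Longrightarrow> z22_minus w z = (0, 0) \<longleftrightarrow> w = z"
  by (elim Z22_cases) simp_all

lemma z22_minus_eq_self_iff: "w \<in> Z22 \<Longrightarrow> z \<in> Z22 \<Longrightarrow> z22_minus w z = w \<longleftrightarrow> z = (0, 0)"
  by (elim Z22_cases) simp_all

lemma z22_minus_eq_iff:
  "w \<in> Z22 \<Longrightarrow> z \<in> Z22 \<Longrightarrow> z' \<in> Z22 \<Longrightarrow> z22_minus w z = z' \<longleftrightarrow> w = z22_minus z' z"
  by (elim Z22_cases) simp_all

lemma z22_minus_cancel:
  "u \<in> Z22 \<Longrightarrow> v \<in> Z22 \<Longrightarrow> z \<in> Z22 \<Longrightarrow>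
    z22_minus (z22_minus u v) (z22_minus z v) = z22_minus u z"
  by (elim Z22_cases) simp_all

lemma z22_minus_third:
  assumes "w \<in> Z22_star" "z \<in> Z22_star" "w \<noteq> z"
  shows "z22_minus w z \<in> Z22_star - {w, z}"
  using assms unfolding Z22_star_def by auto

lemma G_minus_eq: "G_minus l (a, w, x) (b, z, y) = ((a + l - b) mod l, z22_minus w z, x - y)"
  by (cases w; cases z) simp

lemma mem_G_set: "(a, w, x) \<in> G_set l \<longleftrightarrow> a < l \<and> w \<in> Z22"
  unfolding G_set_def Z22_def by simp

lemma finite_G_set: "finite (G_set l :: (nat \<times> (nat \<times> nat) \<times> 'f::finite) set)"
  unfolding G_set_def by simp

lemma card_G_set:
  "card (G_set l :: (nat \<times> (nat \<times> nat) \<times> 'f::finite) set) = 4 * l * card (UNIV :: 'f set)"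
  unfolding G_set_def by (simp add: card_cartesian_product)

lemma G_minus_in_G_set: "x \<in> G_set l \<Longrightarrow> y \<in> G_set l \<Longrightarrow> G_minus l x y \<in> G_set l"
  by (cases x; cases y) (auto simp: G_minus_eq mem_G_set z22_minus_in)

lemma G_minus_eq_0_iff:
  "x \<in> G_set l \<Longrightarrow> y \<in> G_set l \<Longrightarrow> G_minus l x y = (0, (0, 0), 0) \<longleftrightarrow> x = y"
  by (cases x; cases y) (auto simp: G_minus_eq mem_G_set diff_mod_eq_0_iff z22_minus_eq_0_iff)

lemma G_minus_cancel:
  assumes "w \<in> G_set l" "x \<in> G_set l" "y \<in> G_set l"
  shows "G_minus l (G_minus l w x) (G_minus l y x) = G_minus l w y"
proof -
  obtain a u s where w: "w = (a, u, s)" by (cases w)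
  obtain b v t where x: "x = (b, v, t)" by (cases x)
  obtain c z r where y: "y = (c, z, r)" by (cases y)
  have "a < l" "b < l" "c < l" and Z: "u \<in> Z22" "v \<in> Z22" "z \<in> Z22"
    using assms by (simp_all add: w x y mem_G_set)
  then have "((a + l - b) mod l + l - (c + l - b) mod l) mod l = (a + l - c) mod l"
    by (intro diff_mod_cancel)
  moreover have "s - t - (r - t) = s - r" by simp
  ultimately show ?thesis
    unfolding w x y G_minus_eq z22_minus_cancel[OF Z] by (simp only:)
qed

lemma inj_on_G_minus: "x \<in> G_set l \<Longrightarrow> inj_on (\<lambda>y. G_minus l y x) (G_set l)"
proof (rule inj_onI)
  fix y y'
  assume x: "x \<in> G_set l" and y: "y \<in> G_set l" "y' \<in> G_set l"
    and eq: "G_minus l y x = G_minus l y' x"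
  have "G_minus l y y' = G_minus l (G_minus l y' x) (G_minus l y' x)"
    using G_minus_cancel[OF y(1) x y(2)] eq by simp
  also have "\<dots> = (0, (0, 0), 0)"
    by (simp add: G_minus_eq_0_iff G_minus_in_G_set[OF y(2) x])
  finally show "y = y'" by (simp add: G_minus_eq_0_iff[OF y])
qed

lemma bij_betw_G_minus:
  assumes "x \<in> G_set l"
  shows "bij_betw (\<lambda>y. G_minus l y x) (G_set l)
    (G_set l :: (nat \<times> (nat \<times> nat) \<times> 'f::{finite,ab_group_add}) set)"
proof -
  have "(\<lambda>y. G_minus l y x) ` G_set l \<subseteq> G_set l"
    using G_minus_in_G_set assms by blast
  then show ?thesis
    using endo_inj_surj[OF finite_G_set _ inj_on_G_minus[OF assms]] inj_on_G_minus[OF assms]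
    by (simp add: bij_betw_def)
qed

lemma card_G_minus_preimage:
  fixes x :: "nat \<times> (nat \<times> nat) \<times> 'f::{finite,ab_group_add}"
  assumes "x \<in> G_set l"
  shows "card {y \<in> G_set l. P (G_minus l y x)} = card {s \<in> G_set l. P s}"
proof -
  have "bij_betw (\<lambda>y. G_minus l y x) {y \<in> G_set l. P (G_minus l y x)} {s \<in> G_set l. P s}"
    by (rule bij_betw_Collect[OF bij_betw_G_minus[OF assms]]) (rule refl)
  then show ?thesis by (rule bij_betw_same_card)
qed

lemma card_neighbours:
  fixes x :: "nat \<times> (nat \<times> nat) \<times> 'f::{finite,ab_group_add}"
  assumes "x \<in> G_set l" "S \<subseteq> G_set l"
  shows "card {y \<in> G_set l. G_minus l y x \<in> S} = card S"
proof -
  have "card {y \<in> G_set l. G_minus l y x \<in> S} = card {s \<in> G_set l. s \<in> S}"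
    by (rule card_G_minus_preimage[OF assms(1)])
  also have "{s \<in> G_set l. s \<in> S} = S" using assms(2) by blast
  finally show ?thesis .
qed

lemma card_common_neighbours:
  fixes x :: "nat \<times> (nat \<times> nat) \<times> 'f::{finite,ab_group_add}"
  assumes "x \<in> G_set l" "y \<in> G_set l" "S \<subseteq> G_set l"
  shows "card {w \<in> G_set l. G_minus l w x \<in> S \<and> G_minus l w y \<in> S}
       = card {s \<in> S. G_minus l s (G_minus l y x) \<in> S}"
proof -
  let ?P = "\<lambda>s. s \<in> S \<and> G_minus l s (G_minus l y x) \<in> S"
  have "{w \<in> G_set l. G_minus l w x \<in> S \<and> G_minus l w y \<in> S}
      = {w \<in> G_set l. ?P (G_minus l w x)}"
  proof -
    have "G_minus l (G_minus l w x) (G_minus l y x) = G_minus l w y" if "w \<in> G_set l" for w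
      using G_minus_cancel[OF that assms(1,2)] .
    then show ?thesis by auto
  qed
  then have "card {w \<in> G_set l. G_minus l w x \<in> S \<and> G_minus l w y \<in> S}
      = card {s \<in> G_set l. ?P s}"
    using card_G_minus_preimage[OF assms(1)] by simp
  also have "{s \<in> G_set l. ?P s} = {s \<in> S. G_minus l s (G_minus l y x) \<in> S}"
    using assms(3) by blast
  finally show ?thesis .
qed

section \<open>Cyclotomic classes of order three\<close>

lemma nonzero_power_card_minus_one:
  fixes x :: "'f::{finite,field}"
  assumes "x \<noteq> 0"
  shows "x ^ (card (UNIV :: 'f set) - 1) = 1"
proof -
  let ?U = "UNIV - {0 :: 'f}"
  have "(\<Prod>y\<in>?U. x * y) = (\<Prod>y\<in>?U. y)"
    by (rule prod.reindex_bij_witness[of _ "\<lambda>y. y / x" "\<lambda>y. x * y"]) (use assms in auto)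
  moreover have "(\<Prod>y\<in>?U. x * y) = x ^ card ?U * (\<Prod>y\<in>?U. y)"
    by (simp add: prod.distrib)
  moreover have "(\<Prod>y\<in>?U. y) \<noteq> 0" by simp
  ultimately have "x ^ card ?U = 1" by simp
  then show ?thesis by (simp add: card_Diff_singleton)
qed

lemma mod3_add_eq_iff:
  fixes a b c :: nat
  assumes "a < 3" "b < 3" "c < 3"
  shows "(a + c) mod 3 = b \<longleftrightarrow> c = (b + 2 * a) mod 3"
proof -
  have "a = 0 \<or> a = 1 \<or> a = 2" "b = 0 \<or> b = 1 \<or> b = 2" "c = 0 \<or> c = 1 \<or> c = 2"
    using assms by linarith+
  then show ?thesis by (elim disjE) simp_all
qed

lemma mod3_shift_distinct:
  fixes a b c :: nat
  assumes "a < 3" "b < 3" "c < 3" "a \<noteq> b" "a \<noteq> c" "b \<noteq> c"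
  shows "(b + 2 * a) mod 3 = 1 \<and> (c + 2 * a) mod 3 = 2 \<or>
         (b + 2 * a) mod 3 = 2 \<and> (c + 2 * a) mod 3 = 1"
proof -
  have "a = 0 \<or> a = 1 \<or> a = 2" "b = 0 \<or> b = 1 \<or> b = 2" "c = 0 \<or> c = 1 \<or> c = 2"
    using assms(1-3) by linarith+
  then show ?thesis using assms(4-6) by (elim disjE) simp_all
qed

lemma cyc_num_eq_card:
  "cyc_num \<rho> a b = card {t \<in> cyc_class \<rho> a. t + 1 \<in> cyc_class \<rho> b}"
proof -
  have "(\<lambda>x. x + 1) ` cyc_class \<rho> a \<inter> cyc_class \<rho> b
      = (\<lambda>x. x + 1) ` {t \<in> cyc_class \<rho> a. t + 1 \<in> cyc_class \<rho> b}"
    by blast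
  moreover have "inj_on (\<lambda>x :: 'a. x + 1) {t \<in> cyc_class \<rho> a. t + 1 \<in> cyc_class \<rho> b}"
    by (rule inj_onI) simp
  ultimately show ?thesis unfolding cyc_num_def by (simp add: card_image)
qed

locale cubic_cyclotomy =
  fixes \<rho> :: "'f::{finite,field}" and r :: nat
  assumes primitive: "primitive_element \<rho>"
    and card_eq: "card (UNIV :: 'f set) = 6 * r + 1"
begin

lemma r_pos: "0 < r"
proof -
  have "card {0 :: 'f, 1} \<le> card (UNIV :: 'f set)" by (rule card_mono) auto
  then show ?thesis using card_eq by simp
qed

lemma rho_nonzero: "\<rho> \<noteq> 0"
  using primitive by (simp add: primitive_element_def)

lemma nonzero_eq_power: "x \<noteq> 0 \<Longrightarrow> \<exists>j. x = \<rho> ^ j"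
  using primitive by (simp add: primitive_element_def)

lemma power_order: "\<rho> ^ (6 * r) = 1"
  using nonzero_power_card_minus_one[OF rho_nonzero] by (simp add: card_eq)

lemma power_mod_order: "\<rho> ^ (j mod (6 * r)) = \<rho> ^ j"
proof -
  have "\<rho> ^ j = (\<rho> ^ (6 * r)) ^ (j div (6 * r)) * \<rho> ^ (j mod (6 * r))"
    by (simp flip: power_mult power_add)
  then show ?thesis by (simp add: power_order)
qed

lemma inj_on_power: "inj_on (\<lambda>j. \<rho> ^ j) {..<6 * r}"
proof (rule eq_card_imp_inj_on)
  have "(\<lambda>j. \<rho> ^ j) ` {..<6 * r} = UNIV - {0}"
  proof
    show "(\<lambda>j. \<rho> ^ j) ` {..<6 * r} \<subseteq> UNIV - {0}" using rho_nonzero by auto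
    show "UNIV - {0} \<subseteq> (\<lambda>j. \<rho> ^ j) ` {..<6 * r}"
    proof
      fix x assume "x \<in> UNIV - {0 :: 'f}"
      then obtain j where "x = \<rho> ^ (j mod (6 * r))"
        using nonzero_eq_power power_mod_order by fastforce
      moreover have "j mod (6 * r) < 6 * r" using r_pos by simp
      ultimately show "x \<in> (\<lambda>j. \<rho> ^ j) ` {..<6 * r}" by blast
    qed
  qed
  then show "card ((\<lambda>j. \<rho> ^ j) ` {..<6 * r}) = card {..<6 * r}"
    by (simp add: card_Diff_singleton card_eq)
qed simp

lemma power_eq_power_iff: "\<rho> ^ i = \<rho> ^ j \<longleftrightarrow> i mod (6 * r) = j mod (6 * r)"
proof
  assume "\<rho> ^ i = \<rho> ^ j"
  then have "\<rho> ^ (i mod (6 * r)) = \<rho> ^ (j mod (6 * r))" by (simp only: power_mod_order)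
  then show "i mod (6 * r) = j mod (6 * r)"
    by (rule inj_onD[OF inj_on_power]) (simp_all add: r_pos)
next
  assume "i mod (6 * r) = j mod (6 * r)"
  then show "\<rho> ^ i = \<rho> ^ j" by (metis power_mod_order)
qed

text \<open>The discrete logarithm modulo 3, i.e. the index \<open>i\<close> of the class \<open>C\<^sup>3\<^sub>q(i)\<close>
  containing a non-zero \<open>x\<close>; it does not depend on the choice of exponent because 3 divides
  the order \<open>6 r\<close> of \<open>\<rho>\<close>.\<close>
definition cyc_index :: "'f \<Rightarrow> nat" where
  "cyc_index x = (SOME j. x = \<rho> ^ j) mod 3"

lemma cyc_index_power [simp]: "cyc_index (\<rho> ^ j) = j mod 3"
proof -
  have "\<rho> ^ j = \<rho> ^ (SOME k. \<rho> ^ j = \<rho> ^ k)" by (rule someI) (rule refl)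
  then have "(SOME k. \<rho> ^ j = \<rho> ^ k) mod (6 * r) = j mod (6 * r)"
    by (simp add: power_eq_power_iff)
  then have "(SOME k. \<rho> ^ j = \<rho> ^ k) mod (6 * r) mod 3 = j mod (6 * r) mod 3" by simp
  then show ?thesis unfolding cyc_index_def by (simp add: mod_mod_cancel)
qed

lemma cyc_index_lt: "cyc_index x < 3"
  by (simp add: cyc_index_def)

lemma cyc_index_mult:
  assumes "x \<noteq> 0" "y \<noteq> 0"
  shows "cyc_index (x * y) = (cyc_index x + cyc_index y) mod 3"
proof -
  obtain i j where "x = \<rho> ^ i" "y = \<rho> ^ j" using assms nonzero_eq_power by blast
  then show ?thesis by (simp add: power_add mod_add_eq flip: power_add)
qed

lemma minus_one_eq_power: "-1 = \<rho> ^ (3 * r)"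
proof -
  have "(\<rho> ^ (3 * r))\<^sup>2 = 1" using power_order by (simp flip: power_mult)
  moreover have "\<rho> ^ (3 * r) \<noteq> \<rho> ^ 0" using r_pos by (simp only: power_eq_power_iff) simp
  ultimately show ?thesis by (simp add: power2_eq_1_iff)
qed

lemma cyc_index_uminus:
  assumes "x \<noteq> 0"
  shows "cyc_index (- x) = cyc_index x"
proof -
  have "- x = \<rho> ^ (3 * r) * x" by (simp flip: minus_one_eq_power)
  then show ?thesis
    using cyc_index_mult[of "\<rho> ^ (3 * r)" x] assms rho_nonzero cyc_index_lt[of x] by simp
qed

lemma mem_cyc_class:
  assumes "i < 3"
  shows "x \<in> cyc_class \<rho> i \<longleftrightarrow> x \<noteq> 0 \<and> cyc_index x = i"
proof
  assume "x \<in> cyc_class \<rho> i"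
  then obtain j where "x = \<rho> ^ (3 * j + i)" unfolding cyc_class_def by blast
  then show "x \<noteq> 0 \<and> cyc_index x = i" using assms rho_nonzero by simp
next
  assume x: "x \<noteq> 0 \<and> cyc_index x = i"
  then obtain k where "x = \<rho> ^ k" using nonzero_eq_power by blast
  then have k: "x = \<rho> ^ (k mod (6 * r))" by (simp only: power_mod_order)
  define j where "j = k mod (6 * r) div 3"
  have "k mod (6 * r) mod 3 = i" using x k by simp
  then have "k mod (6 * r) = 3 * j + i"
    using div_mult_mod_eq[of "k mod (6 * r)" 3] unfolding j_def by simp
  moreover have "j < 2 * r"
    unfolding j_def using r_pos by (intro less_mult_imp_div_less) simp
  ultimately show "x \<in> cyc_class \<rho> i"
    unfolding cyc_class_def card_eq using k by auto
qed

lemma cyc_class_uminus: "i < 3 \<Longrightarrow> x \<in> cyc_class \<rho> i \<Longrightarrow> - x \<in> cyc_class \<rho> i"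
  by (simp add: mem_cyc_class cyc_index_uminus)

lemma card_cyc_class:
  assumes "i < 3"
  shows "card (cyc_class \<rho> i) = 2 * r"
proof -
  have "cyc_class \<rho> i = (\<lambda>j. \<rho> ^ (3 * j + i)) ` {..<2 * r}"
    unfolding cyc_class_def card_eq by auto
  moreover have "inj_on (\<lambda>j. \<rho> ^ (3 * j + i)) {..<2 * r}"
  proof (rule inj_onI)
    fix j k assume "j \<in> {..<2 * r}" "k \<in> {..<2 * r}" "\<rho> ^ (3 * j + i) = \<rho> ^ (3 * k + i)"
    then have "3 * j + i = 3 * k + i"
      using assms by (intro inj_onD[OF inj_on_power]) auto
    then show "j = k" by simp
  qed
  ultimately show ?thesis by (simp add: card_image)
qed

lemma power_int_mod_order: "\<rho> powi j = \<rho> ^ nat (j mod int (6 * r))"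
proof -
  let ?N = "int (6 * r)"
  have "\<rho> powi j = \<rho> powi (j mod ?N) * (\<rho> powi ?N) powi (j div ?N)"
    using rho_nonzero by (simp flip: power_int_add power_int_mult)
  also have "\<rho> powi ?N = 1" by (simp only: power_int_of_nat power_order)
  finally show ?thesis using r_pos by (simp add: power_int_def)
qed

lemma power_int_cyc_class:
  assumes "i < 3"
  shows "{\<rho> powi j | j :: int. j mod 3 = int i} = cyc_class \<rho> i"
proof
  show "{\<rho> powi j | j :: int. j mod 3 = int i} \<subseteq> cyc_class \<rho> i"
  proof
    fix x assume "x \<in> {\<rho> powi j | j :: int. j mod 3 = int i}"
    then obtain j :: int where j: "x = \<rho> powi j" "j mod 3 = int i" by blast
    have "(3 :: int) dvd int (6 * r)" by simp
    then have "int (nat (j mod int (6 * r)) mod 3) = int i"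
      using j(2) r_pos by (simp add: of_nat_mod mod_mod_cancel)
    then show "x \<in> cyc_class \<rho> i"
      using assms rho_nonzero by (simp add: j(1) power_int_mod_order mem_cyc_class)
  qed
  show "cyc_class \<rho> i \<subseteq> {\<rho> powi j | j :: int. j mod 3 = int i}"
  proof
    fix x assume "x \<in> cyc_class \<rho> i"
    then have "x \<noteq> 0" "cyc_index x = i" using assms by (simp_all add: mem_cyc_class)
    moreover obtain k where "x = \<rho> ^ k" using \<open>x \<noteq> 0\<close> nonzero_eq_power by blast
    ultimately have "x = \<rho> powi int k" "int (k mod 3) = int i" by simp_all
    then have "x = \<rho> powi int k" "int k mod 3 = int i" by (simp_all add: of_nat_mod)
    then show "x \<in> {\<rho> powi j | j :: int. j mod 3 = int i}" by blast
  qed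
qed

text \<open>Since \<open>-1 = \<rho>\<^sup>3\<^sup>r\<close> is a cube, \<open>t \<mapsto> -t - 1\<close> maps the pairs counted by
  \<open>c(a, b)\<close> into those counted by \<open>c(b, a)\<close>.\<close>
lemma cyc_num_le:
  assumes "a < 3" "b < 3"
  shows "cyc_num \<rho> a b \<le> cyc_num \<rho> b a"
proof -
  let ?A = "{t \<in> cyc_class \<rho> a. t + 1 \<in> cyc_class \<rho> b}"
  let ?B = "{t \<in> cyc_class \<rho> b. t + 1 \<in> cyc_class \<rho> a}"
  have "(\<lambda>t. - t - 1) ` ?A \<subseteq> ?B"
  proof
    fix s assume "s \<in> (\<lambda>t. - t - 1) ` ?A"
    then obtain t where t: "t \<in> cyc_class \<rho> a" "t + 1 \<in> cyc_class \<rho> b" "s = - t - 1" by blast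
    have "s = - (t + 1)" "s + 1 = - t" using t(3) by simp_all
    then show "s \<in> ?B"
      using cyc_class_uminus[OF assms(2) t(2)] cyc_class_uminus[OF assms(1) t(1)] by simp
  qed
  then have "card ((\<lambda>t. - t - 1) ` ?A) \<le> card ?B" by (intro card_mono) simp_all
  moreover have "inj_on (\<lambda>t. - t - 1) ?A" by (rule inj_onI) simp
  ultimately show ?thesis by (simp add: card_image cyc_num_eq_card)
qed

lemma cyc_num_commute: "a < 3 \<Longrightarrow> b < 3 \<Longrightarrow> cyc_num \<rho> a b = cyc_num \<rho> b a"
  using cyc_num_le[of a b] cyc_num_le[of b a] by simp

lemma mult_mem_cyc_class_iff:
  assumes "u \<noteq> 0" "b < 3"
  shows "u * x \<in> cyc_class \<rho> b \<longleftrightarrow> x \<in> cyc_class \<rho> ((b + 2 * cyc_index u) mod 3)"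
proof (cases "x = 0")
  case False
  have "(cyc_index u + cyc_index x) mod 3 = b \<longleftrightarrow> cyc_index x = (b + 2 * cyc_index u) mod 3"
    using cyc_index_lt[of u] assms(2) cyc_index_lt[of x] by (rule mod3_add_eq_iff)
  then show ?thesis using assms False by (simp add: mem_cyc_class cyc_index_mult)
qed (use assms in \<open>simp add: mem_cyc_class\<close>)

lemma card_cyc_class_diff:
  assumes "u \<noteq> 0" "b < 3" "c < 3"
  shows "card {v \<in> cyc_class \<rho> b. v - u \<in> cyc_class \<rho> c}
       = cyc_num \<rho> ((c + 2 * cyc_index u) mod 3) ((b + 2 * cyc_index u) mod 3)"
proof -
  let ?b = "(b + 2 * cyc_index u) mod 3" and ?c = "(c + 2 * cyc_index u) mod 3"
  have mem: "u * x \<in> cyc_class \<rho> d \<longleftrightarrow> x \<in> cyc_class \<rho> ((d + 2 * cyc_index u) mod 3)"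
    if "d < 3" for d x using mult_mem_cyc_class_iff[OF assms(1) that] .
  have "bij_betw (\<lambda>v. v / u - 1) {v \<in> cyc_class \<rho> b. v - u \<in> cyc_class \<rho> c}
      {t \<in> cyc_class \<rho> ?c. t + 1 \<in> cyc_class \<rho> ?b}"
  proof (rule bij_betw_byWitness[where f' = "\<lambda>t. u * (t + 1)"])
    show "(\<lambda>v. v / u - 1) ` {v \<in> cyc_class \<rho> b. v - u \<in> cyc_class \<rho> c}
        \<subseteq> {t \<in> cyc_class \<rho> ?c. t + 1 \<in> cyc_class \<rho> ?b}"
    proof (rule image_subsetI)
      fix v assume "v \<in> {v \<in> cyc_class \<rho> b. v - u \<in> cyc_class \<rho> c}"
      then have v: "v \<in> cyc_class \<rho> b" "v - u \<in> cyc_class \<rho> c" by simp_all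
      have "u * (v / u - 1) = v - u" "u * (v / u - 1 + 1) = v"
        using assms(1) by (simp_all add: field_simps)
      then show "v / u - 1 \<in> {t \<in> cyc_class \<rho> ?c. t + 1 \<in> cyc_class \<rho> ?b}"
        using v mem[OF assms(3), of "v / u - 1"] mem[OF assms(2), of "v / u - 1 + 1"] by simp
    qed
    have "u * (t + 1) - u = u * t" for t by (simp add: algebra_simps)
    then show "(\<lambda>t. u * (t + 1)) ` {t \<in> cyc_class \<rho> ?c. t + 1 \<in> cyc_class \<rho> ?b}
        \<subseteq> {v \<in> cyc_class \<rho> b. v - u \<in> cyc_class \<rho> c}"
      using mem[OF assms(2)] mem[OF assms(3)] by auto
  qed (use assms(1) in simp_all)
  then show ?thesis by (simp add: bij_betw_same_card cyc_num_eq_card)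
qed

lemma cyc_num_shift_distinct:
  assumes "a < 3" "b < 3" "c < 3" "a \<noteq> b" "a \<noteq> c" "b \<noteq> c"
  shows "cyc_num \<rho> ((b + 2 * a) mod 3) ((c + 2 * a) mod 3) = cyc_num \<rho> 1 2"
  using mod3_shift_distinct[OF assms] cyc_num_commute[of 2 1] by auto

end

section \<open>The Cayley graph\<close>

definition G_clique :: "nat \<Rightarrow> (nat \<times> (nat \<times> nat) \<times> 'f::zero) set" where
  "G_clique l = {0..<l} \<times> Z22 \<times> {0}"

lemma card_G_clique: "card (G_clique l) = 4 * l"
  by (simp add: G_clique_def Z22_def card_cartesian_product)

lemma S0_eq: "S0 l = G_clique l - {(0, (0, 0), 0)}"
  unfolding S0_def G_clique_def Z22_def by auto

lemma card_S0:
  assumes "0 < l"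
  shows "card (S0 l :: (nat \<times> (nat \<times> nat) \<times> 'f::zero) set) = 4 * l - 1"
proof -
  have "(0, (0, 0), 0) \<in> (G_clique l :: (nat \<times> (nat \<times> nat) \<times> 'f) set)"
    using assms by (simp add: G_clique_def Z22_def)
  then show ?thesis by (simp add: S0_eq card_G_clique)
qed

locale cubic_cayley_graph = cubic_cyclotomy \<rho> r for \<rho> :: "'f::{finite,field}" and r +
  fixes l :: nat and \<pi> :: "nat \<times> nat \<Rightarrow> nat"
  assumes l_pos: "0 < l"
    and pi_bij: "bij_betw \<pi> Z22_star {0, 1, 2}"
begin

lemma pi_lt: "z \<in> Z22_star \<Longrightarrow> \<pi> z < 3"
  using bij_betw_apply[OF pi_bij] by fastforce

lemma pi_eq_iff: "z \<in> Z22_star \<Longrightarrow> w \<in> Z22_star \<Longrightarrow> \<pi> z = \<pi> w \<longleftrightarrow> z = w"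
  using bij_betw_imp_inj_on[OF pi_bij] by (auto simp: inj_on_eq_iff)

lemma cyc_class_pi_unique:
  assumes "z \<in> Z22_star" "w \<in> Z22_star" "x \<in> cyc_class \<rho> (\<pi> z)" "x \<in> cyc_class \<rho> (\<pi> w)"
  shows "z = w"
proof -
  have "\<pi> z = \<pi> w" using assms by (simp add: mem_cyc_class pi_lt)
  then show ?thesis using assms(1,2) by (simp add: pi_eq_iff)
qed

lemma S_z_eq: "z \<in> Z22_star \<Longrightarrow> S_z \<pi> \<rho> z = (\<lambda>v. (0, z, v)) ` cyc_class \<rho> (\<pi> z)"
  unfolding S_z_def by (auto simp flip: power_int_cyc_class[OF pi_lt])

lemma mem_S0: "(a, w, v) \<in> S0 l \<longleftrightarrow> v = 0 \<and> a < l \<and> w \<in> Z22 \<and> (a, w) \<noteq> (0, (0, 0))"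
  unfolding S0_def Z22_def by auto

lemma mem_S_z_union:
  "(a, w, v) \<in> (\<Union>z\<in>Z22_star. S_z \<pi> \<rho> z) \<longleftrightarrow> a = 0 \<and> w \<in> Z22_star \<and> v \<in> cyc_class \<rho> (\<pi> w)"
  by (auto simp: S_z_eq)

lemma mem_S_pi:
  "(a, w, v) \<in> S_pi l \<pi> \<rho> \<longleftrightarrow>
     (v = 0 \<and> a < l \<and> w \<in> Z22 \<and> (a, w) \<noteq> (0, (0, 0))) \<or>
     (a = 0 \<and> w \<in> Z22_star \<and> v \<in> cyc_class \<rho> (\<pi> w))"
  unfolding S_pi_def Un_iff mem_S0 mem_S_z_union ..

lemma S_pi_subset: "S_pi l \<pi> \<rho> \<subseteq> G_set l"
proof
  fix s assume "s \<in> S_pi l \<pi> \<rho>"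
  then show "s \<in> G_set l"
    using l_pos by (cases s) (auto simp: mem_S_pi mem_G_set Z22_star_eq)
qed

lemma card_S_pi: "card (S_pi l \<pi> \<rho>) = 4 * l - 2 + card (UNIV :: 'f set)"
proof -
  let ?U = "\<Union>z\<in>Z22_star. S_z \<pi> \<rho> z"
  have U: "?U = Pair 0 ` (SIGMA w:Z22_star. cyc_class \<rho> (\<pi> w))"
  proof (rule set_eqI)
    fix s :: "nat \<times> (nat \<times> nat) \<times> 'f"
    show "s \<in> ?U \<longleftrightarrow> s \<in> Pair 0 ` (SIGMA w:Z22_star. cyc_class \<rho> (\<pi> w))"
      by (cases s) (simp only: mem_S_z_union, auto)
  qed
  have "card ?U = card (SIGMA w:Z22_star. cyc_class \<rho> (\<pi> w))"
    unfolding U by (rule card_image) (auto simp: inj_on_def)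
  also have "\<dots> = (\<Sum>w\<in>Z22_star. 2 * r)"
    by (simp add: card_cyc_class pi_lt Z22_star_def)
  also have "\<dots> = 6 * r" by (simp add: Z22_star_def)
  finally have card_U: "card ?U = 6 * r" .
  have "S0 l \<inter> ?U = {}" unfolding U by (auto simp: mem_S0 mem_cyc_class pi_lt)
  then have "card (S_pi l \<pi> \<rho>) = card (S0 l :: (nat \<times> (nat \<times> nat) \<times> 'f) set) + card ?U"
    using finite_subset[OF S_pi_subset finite_G_set] unfolding S_pi_def
    by (intro card_Un_disjoint) simp_all
  then show ?thesis using card_S0[where 'f = 'f, OF l_pos] card_U card_eq l_pos by simp
qed

lemma S_pi_inter_shift_S0:
  assumes d: "a0 < l" "w0 \<in> Z22" "(a0, w0) \<noteq> (0, (0, 0))"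
  shows "{s \<in> S_pi l \<pi> \<rho>. G_minus l s (a0, w0, 0) \<in> S_pi l \<pi> \<rho>} = S0 l - {(a0, w0, 0)}"
proof (rule set_eqI)
  fix s :: "nat \<times> (nat \<times> nat) \<times> 'f"
  obtain a w v where s: "s = (a, w, v)" by (cases s)
  show "s \<in> {s \<in> S_pi l \<pi> \<rho>. G_minus l s (a0, w0, 0) \<in> S_pi l \<pi> \<rho>}
    \<longleftrightarrow> s \<in> S0 l - {(a0, w0, 0)}"
  proof (cases "v = 0")
    case True
    have "((a + l - a0) mod l, z22_minus w w0) = (0, (0, 0)) \<longleftrightarrow> (a, w) = (a0, w0)"
      if "a < l" "w \<in> Z22" using that d by (simp add: diff_mod_eq_0_iff z22_minus_eq_0_iff)
    then show ?thesis
      using True l_pos d by (auto simp: s G_minus_eq mem_S_pi mem_S0 mem_cyc_class pi_lt z22_minus_in)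
  next
    case False
    have "G_minus l s (a0, w0, 0) \<notin> S_pi l \<pi> \<rho>" if "s \<in> S_pi l \<pi> \<rho>"
    proof
      assume diff: "G_minus l s (a0, w0, 0) \<in> S_pi l \<pi> \<rho>"
      have w: "a = 0" "w \<in> Z22_star" "v \<in> cyc_class \<rho> (\<pi> w)"
        using that False by (simp_all add: s mem_S_pi)
      then have "(l - a0) mod l = 0" "z22_minus w w0 \<in> Z22_star"
        "v \<in> cyc_class \<rho> (\<pi> (z22_minus w w0))"
        using diff False by (simp_all add: s G_minus_eq mem_S_pi)
      then have "a0 = 0" "z22_minus w w0 = w"
        using d(1) cyc_class_pi_unique w(2,3) by (auto simp: diff_mod_eq_0_iff[of 0 l a0, simplified])
      then show False using d w(2) by (simp add: Z22_star_eq z22_minus_eq_self_iff)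
    qed
    then show ?thesis using False by (auto simp: s mem_S0)
  qed
qed

lemma card_S_pi_inter_shift_S0:
  assumes "a0 < l" "w0 \<in> Z22" "(a0, w0) \<noteq> (0, (0, 0))"
  shows "card {s \<in> S_pi l \<pi> \<rho>. G_minus l s (a0, w0, 0) \<in> S_pi l \<pi> \<rho>} = 4 * l - 2"
proof -
  have "(a0, w0, 0) \<in> (S0 l :: (nat \<times> (nat \<times> nat) \<times> 'f) set)" using assms by (simp add: mem_S0)
  then show ?thesis
    using card_S0[where 'f = 'f, OF l_pos] by (simp add: S_pi_inter_shift_S0[OF assms])
qed

lemma S_pi_inter_shift_S_z:
  assumes z0: "z0 \<in> Z22_star" and u: "u \<in> cyc_class \<rho> (\<pi> z0)"
  shows "{s \<in> S_pi l \<pi> \<rho>. G_minus l s (0, z0, u) \<in> S_pi l \<pi> \<rho>}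
       = Pair 0 ` (SIGMA w:Z22_star - {z0}.
           {v \<in> cyc_class \<rho> (\<pi> w). v - u \<in> cyc_class \<rho> (\<pi> (z22_minus w z0))})"
    (is "?L = ?R")
proof (rule set_eqI)
  fix s :: "nat \<times> (nat \<times> nat) \<times> 'f"
  obtain a w v where s: "s = (a, w, v)" by (cases s)
  have z0': "z0 \<in> Z22" "z0 \<noteq> (0, 0)" using z0 by (simp_all add: Z22_star_eq)
  have u0: "u \<noteq> 0" using u z0 by (simp add: mem_cyc_class pi_lt)
  show "s \<in> ?L \<longleftrightarrow> s \<in> ?R"
  proof
    assume "s \<in> ?L"
    then have S: "(a, w, v) \<in> S_pi l \<pi> \<rho>"
      and D: "(a mod l, z22_minus w z0, v - u) \<in> S_pi l \<pi> \<rho>"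
      by (simp_all add: s G_minus_eq)
    show "s \<in> ?R"
    proof (cases "v = 0")
      case True
      then have a: "a < l" "w \<in> Z22" "(a, w) \<noteq> (0, (0, 0))"
        using S by (auto simp: mem_S_pi mem_cyc_class pi_lt)
      have minus_u: "- u \<in> cyc_class \<rho> (\<pi> z0)" using u z0 by (simp add: cyc_class_uminus pi_lt)
      have "a = 0" "z22_minus w z0 \<in> Z22_star" "- u \<in> cyc_class \<rho> (\<pi> (z22_minus w z0))"
        using D True u0 a(1) by (simp_all add: mem_S_pi)
      moreover have "z22_minus w z0 = z0"
        using cyc_class_pi_unique[OF calculation(2) z0 calculation(3) minus_u] .
      then have "w = (0, 0)" using a(2) z0' by (simp add: z22_minus_eq_iff)
      then show ?thesis using \<open>a = 0\<close> a(3) by simp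
    next
      case False
      then have w: "a = 0" "w \<in> Z22_star" "v \<in> cyc_class \<rho> (\<pi> w)"
        using S by (simp_all add: mem_S_pi)
      have "w \<noteq> z0"
        using D w z0' by (auto simp: mem_S_pi Z22_star_eq z22_minus_eq_0_iff)
      moreover have "v \<noteq> u" using \<open>w \<noteq> z0\<close> cyc_class_pi_unique u w(2,3) z0 by blast
      ultimately have "v - u \<in> cyc_class \<rho> (\<pi> (z22_minus w z0))"
        using D w by (simp add: mem_S_pi)
      then show ?thesis using w \<open>w \<noteq> z0\<close> by (auto simp: s)
    qed
  next
    assume "s \<in> ?R"
    then have w: "a = 0" "w \<in> Z22_star" "w \<noteq> z0" "v \<in> cyc_class \<rho> (\<pi> w)"
      and "v - u \<in> cyc_class \<rho> (\<pi> (z22_minus w z0))" by (auto simp: s)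
    moreover have "z22_minus w z0 \<in> Z22_star" using z22_minus_third[OF w(2) z0 w(3)] by blast
    ultimately show "s \<in> ?L" using l_pos by (simp add: s G_minus_eq mem_S_pi)
  qed
qed

lemma card_S_pi_inter_shift_S_z:
  assumes z0: "z0 \<in> Z22_star" and u: "u \<in> cyc_class \<rho> (\<pi> z0)"
  shows "card {s \<in> S_pi l \<pi> \<rho>. G_minus l s (0, z0, u) \<in> S_pi l \<pi> \<rho>} = 2 * cyc_num \<rho> 1 2"
proof -
  let ?T = "\<lambda>w. {v \<in> cyc_class \<rho> (\<pi> w). v - u \<in> cyc_class \<rho> (\<pi> (z22_minus w z0))}"
  have card_T: "card (?T w) = cyc_num \<rho> 1 2" if w: "w \<in> Z22_star - {z0}" for w
  proof -
    let ?z = "z22_minus w z0"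
    have "?z \<in> Z22_star - {w, z0}" using z22_minus_third w z0 by blast
    then have "\<pi> z0 \<noteq> \<pi> ?z" "\<pi> z0 \<noteq> \<pi> w" "\<pi> ?z \<noteq> \<pi> w" using w z0 by (auto simp: pi_eq_iff)
    moreover have "u \<noteq> 0" "cyc_index u = \<pi> z0" using u z0 by (simp_all add: mem_cyc_class pi_lt)
    ultimately show ?thesis
        using card_cyc_class_diff[of u "\<pi> w" "\<pi> ?z"]
        cyc_num_shift_distinct[of "\<pi> z0" "\<pi> ?z" "\<pi> w"] w z0 \<open>?z \<in> Z22_star - {w, z0}\<close> by (simp add: pi_lt)
  qed
  have "card (Pair 0 ` (SIGMA w:Z22_star - {z0}. ?T w)) = card (SIGMA w:Z22_star - {z0}. ?T w)"
    by (rule card_image) (simp add: inj_on_def)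
  also have "\<dots> = (\<Sum>w\<in>Z22_star - {z0}. cyc_num \<rho> 1 2)"
    by (simp add: card_T Z22_star_def)
  also have "\<dots> = 2 * cyc_num \<rho> 1 2"
    using z0 by (simp add: card_Diff_singleton Z22_star_def)
  finally show ?thesis by (simp only: S_pi_inter_shift_S_z[OF z0 u])
qed

lemma card_common_neighbours_cay_adj:
  assumes "x \<in> G_set l" "y \<in> G_set l" "cay_adj l \<pi> \<rho> x y"
    and lambda: "4 * l - 2 = 2 * cyc_num \<rho> 1 2"
  shows "card {w \<in> G_set l. cay_adj l \<pi> \<rho> x w \<and> cay_adj l \<pi> \<rho> y w} = 4 * l - 2"
proof -
  obtain a0 w0 v0 where d: "G_minus l y x = (a0, w0, v0)" by (cases "G_minus l y x")
  have "card {w \<in> G_set l. cay_adj l \<pi> \<rho> x w \<and> cay_adj l \<pi> \<rho> y w}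
      = card {s \<in> S_pi l \<pi> \<rho>. G_minus l s (a0, w0, v0) \<in> S_pi l \<pi> \<rho>}"
    unfolding cay_adj_def using card_common_neighbours[OF assms(1,2) S_pi_subset] d by simp
  also have "\<dots> = 4 * l - 2"
    using \<open>cay_adj l \<pi> \<rho> x y\<close> unfolding cay_adj_def d mem_S_pi
    by (elim disjE conjE) (simp_all add: card_S_pi_inter_shift_S0 card_S_pi_inter_shift_S_z lambda)
  finally show ?thesis .
qed

lemma edge_regular_cay_adj:
  assumes "4 * l - 2 = 2 * cyc_num \<rho> 1 2"
  shows "edge_regular (G_set l) (cay_adj l \<pi> \<rho>) (4 * l * card (UNIV :: 'f set))
    (4 * l - 2 + card (UNIV :: 'f set)) (4 * l - 2)"
  unfolding edge_regular_def
proof (intro conjI ballI impI)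
  have "(0, (0, 1), 0) \<in> S_pi l \<pi> \<rho>" using l_pos by (simp add: mem_S_pi Z22_def)
  then have "cay_adj l \<pi> \<rho> (0, (0, 0), 0) (0, (0, 1), 0)" by (simp add: cay_adj_def)
  moreover have "(0, (0, 0), 0) \<in> G_set l" "(0, (0, 1), 0) \<in> G_set l"
    using l_pos by (simp_all add: mem_G_set Z22_def)
  ultimately show "\<exists>x\<in>G_set l. \<exists>y\<in>G_set l. cay_adj l \<pi> \<rho> x y" by blast
  show "card {y \<in> G_set l. cay_adj l \<pi> \<rho> x y} = 4 * l - 2 + card (UNIV :: 'f set)"
    if "x \<in> G_set l" for x
    unfolding cay_adj_def using card_neighbours[OF that S_pi_subset] card_S_pi by simp
qed (simp_all add: finite_G_set card_G_set card_common_neighbours_cay_adj assms)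

lemma is_clique_G_clique: "is_clique (G_set l) (cay_adj l \<pi> \<rho>) (G_clique l)"
  unfolding is_clique_def
proof (intro conjI ballI impI)
  show "G_clique l \<subseteq> G_set l" by (auto simp: G_clique_def mem_G_set)
  fix x y :: "nat \<times> (nat \<times> nat) \<times> 'f"
  assume "x \<in> G_clique l" "y \<in> G_clique l" "x \<noteq> y"
  moreover obtain a w b z where xy: "x = (a, w, 0)" "y = (b, z, 0)"
    using \<open>x \<in> G_clique l\<close> \<open>y \<in> G_clique l\<close> by (auto simp: G_clique_def)
  ultimately have "a < l" "b < l" "w \<in> Z22" "z \<in> Z22" "(b, z) \<noteq> (a, w)"
    by (auto simp: G_clique_def)
  then show "cay_adj l \<pi> \<rho> x y" unfolding xy
    using l_pos
    by (simp add: cay_adj_def G_minus_eq mem_S_pi z22_minus_in diff_mod_eq_0_iff z22_minus_eq_0_iff)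
qed

lemma card_adj_G_clique:
  assumes "x \<in> G_set l - G_clique l"
  shows "card {y \<in> G_clique l. cay_adj l \<pi> \<rho> x y} = 1"
proof -
  obtain a w t where x: "x = (a, w, t)" by (cases x)
  have a: "a < l" "w \<in> Z22" "t \<noteq> 0" using assms by (auto simp: x mem_G_set G_clique_def)
  have "cyc_index (- t) \<in> \<pi> ` Z22_star"
    using pi_bij cyc_index_lt[of "- t"] by (auto simp: bij_betw_def)
  then obtain z where z: "z \<in> Z22_star" "\<pi> z = cyc_index (- t)" by (metis imageE)
  have class_iff: "- t \<in> cyc_class \<rho> (\<pi> z') \<longleftrightarrow> z' = z" if "z' \<in> Z22_star" for z'
    using that z a(3) by (auto simp: mem_cyc_class pi_lt pi_eq_iff)
  have adj_iff: "cay_adj l \<pi> \<rho> x (b, w', 0) \<longleftrightarrow> b = a \<and> w' = z22_minus z w"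
    if "b < l" "w' \<in> Z22" for b w'
  proof -
    have "cay_adj l \<pi> \<rho> x (b, w', 0) \<longleftrightarrow>
        (b + l - a) mod l = 0 \<and> z22_minus w' w \<in> Z22_star \<and>
        - t \<in> cyc_class \<rho> (\<pi> (z22_minus w' w))"
      using a(3) by (simp add: cay_adj_def x G_minus_eq mem_S_pi)
    also have "\<dots> \<longleftrightarrow> b = a \<and> z22_minus w' w = z"
      using class_iff[of "z22_minus w' w"] z(1) that(1) a(1) by (auto simp: diff_mod_eq_0_iff)
    also have "\<dots> \<longleftrightarrow> b = a \<and> w' = z22_minus z w"
      using z(1) that(2) a(2) by (simp add: Z22_star_eq z22_minus_eq_iff)
    finally show ?thesis .
  qed
  have "z22_minus z w \<in> Z22" using z(1) a(2) by (simp add: Z22_star_eq z22_minus_in)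
  then have "{y \<in> G_clique l. cay_adj l \<pi> \<rho> x y} = {(a, z22_minus z w, 0)}"
    using a(1) by (auto simp: G_clique_def adj_iff)
  then show ?thesis by simp
qed

lemma regular_clique_G_clique: "regular_clique (G_set l) (cay_adj l \<pi> \<rho>) (G_clique l)"
  unfolding regular_clique_def using is_clique_G_clique card_adj_G_clique by auto

end

theorem theorem3p6:
  fixes \<rho> :: "'f::{finite,field}"
    and \<pi> :: "nat \<times> nat \<Rightarrow> nat"
    and c l :: nat
  assumes "card (UNIV :: 'f set) mod 6 = 1"
    and "primitive_element \<rho>"
    and "bij_betw \<pi> Z22_star {0, 1, 2}"
    and "c = cyc_num \<rho> 1 2"
    and "odd c"
    and "l = (c + 1) div 2"
  shows "edge_regular (G_set l) (cay_adj l \<pi> \<rho>) (4 * l * card (UNIV :: 'f set)) (4 * l - 2 + card (UNIV :: 'f set)) (4 * l - 2)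
     \<and> (\<exists>C. regular_clique (G_set l) (cay_adj l \<pi> \<rho>) C \<and> card C = 4 * l)"
proof -
  obtain r where "card (UNIV :: 'f set) = 6 * r + 1"
    using div_mult_mod_eq[of "card (UNIV :: 'f set)" 6] assms(1) by (metis mult.commute)
  moreover have "0 < l" using assms(5,6) by (auto elim: oddE)
  ultimately interpret cubic_cayley_graph \<rho> r l \<pi>
    using assms(2,3) by unfold_locales
  have "4 * l - 2 = 2 * cyc_num \<rho> 1 2" using assms(4-6) by (auto elim: oddE)
  then show ?thesis
    using edge_regular_cay_adj regular_clique_G_clique card_G_clique by blast
qed

end
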